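(* For every integer $n\ge1$, $$\sum_{k=1}^n\frac{\binom{2n}{k}(-1)^k}{k}=-H_{2n}+\frac34\sum_{k=1}^n\frac{\binom{2k}{k}(-1)^k}{k}-\frac14\sum_{k=1}^n\frac{2k\binom{2k}{k}(-1)^k}{(2k-1)^2}.$$
   Context: $H_m=\sum_{j=1}^m1/j$. *)

theory Defs
  imports "HOL-Analysis.Analysis"
begin

end

theory Submission
  imports Defs
begin

text \<open>
  Let \<open>F m j = \<Sum>k=1..j. (m choose k) (-1)^k / k\<close>. Pascal's rule and the absorption
  identity \<open>(j+1) (m choose j+1) = (m-j) (m choose j)\<close> give the recurrence
  \<open>F (m+1) j = F m j + ((-1)^j (m choose j) - 1) / (m+1)\<close> in the upper index.
  Passing from \<open>F (2n) n\<close> to \<open>F (2n+2) (n+1)\<close> takes two such steps and one extra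
  summand; writing everything in terms of \<open>(2n+2 choose n+1)\<close>, the increment is exactly
  the increment of the right-hand side, so the identity follows by induction on \<open>n\<close>.
\<close>

definition alternating_binomial_harmonic :: "nat \<Rightarrow> nat \<Rightarrow> real" where
  "alternating_binomial_harmonic m j = (\<Sum>k=1..j. real (m choose k) * (-1)^k / real k)"

lemma Suc_times_binomial_Suc_eq_diff_times_binomial:
  "Suc j * (m choose Suc j) = (m - j) * (m choose j)"
  by (metis binomial_absorption binomial_absorb_comp)

lemma of_nat_Suc_times_binomial_Suc:
  "real (Suc j) * real (m choose Suc j) = (real m - real j) * real (m choose j)"
proof (cases "j \<le> m")
  case True
  then show ?thesis
    using arg_cong[OF Suc_times_binomial_Suc_eq_diff_times_binomial[of j m], of real]
    by (simp add: of_nat_diff algebra_simps)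
qed (simp add: binomial_eq_0)

lemma alternating_binomial_harmonic_Suc_left:
  "alternating_binomial_harmonic (Suc m) j =
     alternating_binomial_harmonic m j + ((-1)^j * real (m choose j) - 1) / (real m + 1)"
proof (induction j)
  case 0
  then show ?case by (simp add: alternating_binomial_harmonic_def)
next
  case (Suc j)
  have absorb:
    "real (m choose j) * (-1)^Suc j / real (Suc j) + (-1)^j * real (m choose j) / (real m + 1)
      = (-1)^Suc j * real (m choose Suc j) / (real m + 1)" (is "?lhs = _")
  proof -
    have "?lhs = (-1)^Suc j * ((real m - real j) * real (m choose j)) / (real (Suc j) * (real m + 1))"
      by (simp add: field_simps)
    then show ?thesis
      by (simp flip: of_nat_Suc_times_binomial_Suc)
  qed
  show ?case
    using Suc.IH absorb
    by (simp add: alternating_binomial_harmonic_def add_divide_distrib diff_divide_distrib ring_distribs)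
qed

lemma binomial_Suc_double_Suc: "(Suc (Suc (2 * n)) choose Suc n) = 2 * (Suc (2 * n) choose Suc n)"
  using binomial_symmetric[of n "Suc (2 * n)"] by simp

lemma alternating_binomial_harmonic_diagonal_Suc:
  fixes n :: nat
  defines "c \<equiv> real (2 * Suc n choose Suc n)"
  shows "alternating_binomial_harmonic (2 * Suc n) (Suc n) =
      alternating_binomial_harmonic (2 * n) n - 1 / (2 * real n + 1) - 1 / (2 * real n + 2)
      + 3/4 * (c * (-1)^Suc n / real (Suc n))
      - 1/4 * (2 * real (Suc n) * c * (-1)^Suc n / (2 * real (Suc n) - 1)^2)"
proof -
  have double: "2 * Suc n = Suc (Suc (2 * n))" by simp
  have odd: "real (Suc (2 * n) choose Suc n) = c / 2"
    unfolding c_def double binomial_Suc_double_Suc by (simp del: binomial_Suc_Suc)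
  have "real (Suc (2 * n)) * real (2 * n choose n) = real (Suc (2 * n) choose Suc n) * real (Suc n)"
    using arg_cong[OF Suc_times_binomial_eq[of "2 * n" n], of real] by (simp only: of_nat_mult)
  then have central: "real (2 * n choose n) = c * (real n + 1) / (2 * (2 * real n + 1))"
    unfolding odd by (simp add: field_simps)
  have even_step: "alternating_binomial_harmonic (Suc (Suc (2 * n))) (Suc n) =
      alternating_binomial_harmonic (Suc (2 * n)) (Suc n)
      + ((-1)^Suc n * real (Suc (2 * n) choose Suc n) - 1) / (2 * real n + 2)"
    using alternating_binomial_harmonic_Suc_left[of "Suc (2 * n)" "Suc n"] by (simp add: add_ac)
  have extra_term: "alternating_binomial_harmonic (Suc (2 * n)) (Suc n) =
      alternating_binomial_harmonic (Suc (2 * n)) n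
      + real (Suc (2 * n) choose Suc n) * (-1)^Suc n / real (Suc n)"
    by (simp add: alternating_binomial_harmonic_def del: binomial_Suc_Suc)
  have odd_step: "alternating_binomial_harmonic (Suc (2 * n)) n =
      alternating_binomial_harmonic (2 * n) n
      + ((-1)^n * real (2 * n choose n) - 1) / (2 * real n + 1)"
    using alternating_binomial_harmonic_Suc_left[of "2 * n" n] by simp
  have "real n + 1 \<noteq> 0" "2 * real n + 1 \<noteq> 0" "2 * real n + 2 \<noteq> 0" by linarith+
  then show ?thesis
    unfolding double even_step extra_term odd_step central odd
    by (simp add: divide_simps power2_eq_square) (simp add: algebra_simps)
qed

lemma harm_double_Suc:
  "harm (2 * Suc n) = harm (2 * n) + 1 / (2 * real n + 1) + (1 / (2 * real n + 2) :: real)"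
proof -
  have "2 * Suc n = Suc (Suc (2 * n))" by simp
  then show ?thesis by (simp add: harm_Suc inverse_eq_divide add_ac)
qed

theorem mainTheorem13:
  fixes n :: nat
  assumes "n \<ge> 1"
  shows "(\<Sum>k=1..n. real ((2*n) choose k) * (-1)^k / real k) =
    - harm (2*n)
    + 3/4 * (\<Sum>k=1..n. real ((2*k) choose k) * (-1)^k / real k)
    - 1/4 * (\<Sum>k=1..n. 2 * real k * real ((2*k) choose k) * (-1)^k / (2 * real k - 1)^2)"
proof -
  have "alternating_binomial_harmonic (2 * n) n = - harm (2*n)
    + 3/4 * (\<Sum>k=1..n. real ((2*k) choose k) * (-1)^k / real k)
    - 1/4 * (\<Sum>k=1..n. 2 * real k * real ((2*k) choose k) * (-1)^k / (2 * real k - 1)^2)"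
  proof (induction n)
    case 0
    then show ?case by (simp add: alternating_binomial_harmonic_def harm_def)
  next
    case (Suc n)
    then show ?case
      using alternating_binomial_harmonic_diagonal_Suc[of n] harm_double_Suc[of n]
      by (simp only: sum.cl_ivl_Suc) (simp add: algebra_simps)
  qed
  then show ?thesis by (simp add: alternating_binomial_harmonic_def)
qed

end
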